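(* Let $\ell,r\geq 1$ and let $C_{\ell,r}$ be the double-cycle obtained from a directed cycle of length $\ell$ and a directed cycle of length $r$ by identifying one vertex of each. Then $C_{\ell,r}$ admits a boolean nilpotent function if and only if $\min(\ell,r)$ divides $\max(\ell,r)$, and every boolean nilpotent function admitted by $C_{\ell,r}$ has class $2\max(\ell,r)-1$.
   Context: A directed cycle of length $1$ is a single vertex with a loop. $C_{\ell,r}$ has $\ell+r-1$ vertices. A boolean function on a finite vertex set $V$ is a map $f:\{0,1\}^V\to\{0,1\}^V$; its (unsigned) interaction graph has an arc $(j,i)$ iff $f_i$ depends essentially on $x_j$, i.e. $f_i(a)\neq f_i(b)$ for some $a,b$ differing only in coordinate $j$. A digraph $G$ admits $f$ if the interaction graph of $f$ equals $G$. $f$ is nilpotent if $f^k$ is constant for some $k\geq 0$ ($f^0=\mathrm{id}$); the least such $k$ is its class. *)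

theory Defs
  imports Main
begin

text \<open>Configurations on a vertex set V: maps nat \<Rightarrow> bool that are False outside V
  (i.e. elements of {0,1}^V).\<close>
definition conf :: "nat set \<Rightarrow> (nat \<Rightarrow> bool) set" where
  "conf V = {x. \<forall>i. i \<notin> V \<longrightarrow> \<not> x i}"

definition boolfun :: "nat set \<Rightarrow> ((nat \<Rightarrow> bool) \<Rightarrow> (nat \<Rightarrow> bool)) \<Rightarrow> bool" where
  "boolfun V f \<longleftrightarrow> (\<forall>x \<in> conf V. f x \<in> conf V)"

definition interaction_graph :: "nat set \<Rightarrow> ((nat \<Rightarrow> bool) \<Rightarrow> (nat \<Rightarrow> bool)) \<Rightarrow> (nat \<times> nat) set" where
  "interaction_graph V f = {(j, i). j \<in> V \<and> i \<in> V \<and>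
      (\<exists>a \<in> conf V. f a i \<noteq> f (a(j := \<not> a j)) i)}"

definition admits :: "nat set \<Rightarrow> (nat \<times> nat) set \<Rightarrow> ((nat \<Rightarrow> bool) \<Rightarrow> (nat \<Rightarrow> bool)) \<Rightarrow> bool" where
  "admits V G f \<longleftrightarrow> boolfun V f \<and> interaction_graph V f = G"

definition const_iter :: "nat set \<Rightarrow> ((nat \<Rightarrow> bool) \<Rightarrow> (nat \<Rightarrow> bool)) \<Rightarrow> nat \<Rightarrow> bool" where
  "const_iter V f k \<longleftrightarrow> (\<exists>c. \<forall>x \<in> conf V. (f ^^ k) x = c)"

definition nilpotent :: "nat set \<Rightarrow> ((nat \<Rightarrow> bool) \<Rightarrow> (nat \<Rightarrow> bool)) \<Rightarrow> bool" where
  "nilpotent V f \<longleftrightarrow> (\<exists>k. const_iter V f k)"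

definition nil_class :: "nat set \<Rightarrow> ((nat \<Rightarrow> bool) \<Rightarrow> (nat \<Rightarrow> bool)) \<Rightarrow> nat" where
  "nil_class V f = (LEAST k. const_iter V f k)"

text \<open>Arcs of the directed cycle through the listed vertices, in order
  (a list of length 1 gives a loop).\<close>
definition cycle_arcs :: "nat list \<Rightarrow> (nat \<times> nat) set" where
  "cycle_arcs vs = {(vs ! i, vs ! ((i + 1) mod length vs)) | i. i < length vs}"

text \<open>Double cycle C_{l,r} on vertices {0..<l+r-1}: cycle 0,1,..,l-1 and cycle 0,l,..,l+r-2,
  sharing vertex 0.\<close>
definition double_cycle :: "nat \<Rightarrow> nat \<Rightarrow> (nat \<times> nat) set" where
  "double_cycle l r = cycle_arcs [0..<l] \<union> cycle_arcs (0 # [l..<l + r - 1])"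

end

theory Submission
  imports Defs
begin

text \<open>
  Every vertex of the double cycle except the common one (the root) has a single in-neighbour,
  so an admitted function copies values along the two cycles, possibly negating them, while the
  root applies a rule depending on both of its in-neighbours. Undoing the negations by a change
  of sign, the sequence \<open>a\<close> of root values satisfies the delay recurrence
  \<open>a t = g (a (t - l)) (a (t - r))\<close>, where the values not yet determined by the recurrence are
  the initial contents of the cycles. Every solution arises this way, and for
  \<open>k \<ge> max l r - 1\<close> the configuration at time \<open>k\<close> is encoded by the last \<open>max l r\<close> root
  values. Hence \<open>f\<^sup>k\<close> is constant iff all solutions agree on this window at time \<open>k\<close>.

  If that happens (say \<open>l \<le> r\<close>, by symmetry), \<open>g\<close> has a fixed point but not two, so its
  diagonal is constant, say \<open>c\<close>. For \<open>l = r\<close> every solution equals \<open>c\<close> from time \<open>r\<close> on.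
  For \<open>l < r\<close>, a xor rule can be run backwards and never forgets the initial value, and a rule
  leaving \<open>c\<close> only on one input pair admits a non-constant periodic solution, unless that pair
  is \<open>(\<not> c, c)\<close> and \<open>l\<close> divides \<open>r\<close>: then a value \<open>\<not> c\<close> at time \<open>t \<ge> r\<close> would force
  \<open>\<not> c\<close> at \<open>t - l, t - 2l, \<dots>, t - r\<close>, which blocks the rule at time \<open>t\<close>. In all
  synchronizing cases the solutions become constant exactly at time \<open>r\<close>, which gives the
  class \<open>2 max l r - 1\<close>.
\<close>

section \<open>Boolean delay systems\<close>

definition delayed :: "(nat \<Rightarrow> bool) \<Rightarrow> nat \<Rightarrow> (nat \<Rightarrow> bool) \<Rightarrow> nat \<Rightarrow> bool" where
  "delayed u d a t = (if d \<le> Suc t then a (Suc t - d) else u t)"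

text \<open>A root sequence: each value combines the values that were at the root \<open>l\<close> and \<open>r\<close> steps
  earlier; as long as a cycle has not been traversed, it delivers an arbitrary input stream.\<close>
definition trajectory :: "nat \<Rightarrow> nat \<Rightarrow> (bool \<Rightarrow> bool \<Rightarrow> bool) \<Rightarrow> (nat \<Rightarrow> bool) \<Rightarrow> bool" where
  "trajectory l r g a \<longleftrightarrow> (\<exists>u v. \<forall>t. a (Suc t) = g (delayed u l a t) (delayed v r a t))"

definition window_eq :: "nat \<Rightarrow> nat \<Rightarrow> (nat \<Rightarrow> bool) \<Rightarrow> (nat \<Rightarrow> bool) \<Rightarrow> bool" where
  "window_eq L k a b \<longleftrightarrow> (\<forall>j<L. a (k - j) = b (k - j))"

definition synchronizing :: "nat \<Rightarrow> nat \<Rightarrow> (bool \<Rightarrow> bool \<Rightarrow> bool) \<Rightarrow> nat \<Rightarrow> bool" where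
  "synchronizing l r g k \<longleftrightarrow>
     (\<forall>a b. trajectory l r g a \<longrightarrow> trajectory l r g b \<longrightarrow> window_eq (max l r) k a b)"

definition depends_on_both :: "(bool \<Rightarrow> bool \<Rightarrow> bool) \<Rightarrow> bool" where
  "depends_on_both g \<longleftrightarrow> (\<exists>v. g True v \<noteq> g False v) \<and> (\<exists>u. g u True \<noteq> g u False)"

function run :: "nat \<Rightarrow> nat \<Rightarrow> (bool \<Rightarrow> bool \<Rightarrow> bool) \<Rightarrow> bool \<Rightarrow> (nat \<Rightarrow> bool) \<Rightarrow> (nat \<Rightarrow> bool) \<Rightarrow> nat \<Rightarrow> bool"
  where
  "run l r g a0 u v 0 = a0"
| "run l r g a0 u v (Suc t) =
     g (if 0 < l \<and> l \<le> Suc t then run l r g a0 u v (Suc t - l) else u t)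
       (if 0 < r \<and> r \<le> Suc t then run l r g a0 u v (Suc t - r) else v t)"
  by pat_completeness auto
termination by (relation "measure (\<lambda>(_, _, _, _, _, _, t). t)") auto

lemma trajectory_run: "0 < l \<Longrightarrow> 0 < r \<Longrightarrow> trajectory l r g (run l r g a0 u v)"
  unfolding trajectory_def delayed_def by (rule exI[of _ u], rule exI[of _ v]) auto

lemma trajectory_swap: "trajectory l r g a \<longleftrightarrow> trajectory r l (\<lambda>u v. g v u) a"
  unfolding trajectory_def by blast

lemma synchronizing_swap: "synchronizing l r g k \<longleftrightarrow> synchronizing r l (\<lambda>u v. g v u) k"
  unfolding synchronizing_def using trajectory_swap[of l r g] by (simp add: max.commute)

lemma depends_on_both_swap: "depends_on_both g \<longleftrightarrow> depends_on_both (\<lambda>u v. g v u)"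
  unfolding depends_on_both_def by auto

lemma trajectory_const: "g c c = c \<Longrightarrow> trajectory l r g (\<lambda>_. c)"
  unfolding trajectory_def delayed_def by auto

lemma trajectoryE:
  assumes "trajectory l r g a" "0 < t"
  obtains u v where "a t = g u v" "l \<le> t \<Longrightarrow> u = a (t - l)" "r \<le> t \<Longrightarrow> v = a (t - r)"
proof -
  obtain uA uB where "a (Suc s) = g (delayed uA l a s) (delayed uB r a s)" for s
    using assms(1) unfolding trajectory_def by blast
  moreover obtain s where "t = Suc s" using assms(2) gr0_implies_Suc by blast
  ultimately show thesis using that unfolding delayed_def by auto
qed

lemma trajectory_step:
  assumes "trajectory l r g a" "0 < t" "l \<le> t" "r \<le> t"
  shows "a t = g (a (t - l)) (a (t - r))"
proof -
  obtain u v where "a t = g u v" "u = a (t - l)" "v = a (t - r)"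
    using trajectoryE[OF assms(1,2)] assms(3,4) by metis
  then show ?thesis by simp
qed

lemma delayed_shift:
  "delayed (\<lambda>t. delayed u d a (Suc t)) d (\<lambda>t. a (Suc t)) t = delayed u d a (Suc t)"
  by (cases "d \<le> Suc t") (simp_all add: delayed_def Suc_diff_le)

lemma trajectory_shift:
  assumes "trajectory l r g a"
  shows "trajectory l r g (\<lambda>t. a (Suc t))"
proof -
  obtain u v where "\<forall>t. a (Suc t) = g (delayed u l a t) (delayed v r a t)"
    using assms unfolding trajectory_def by blast
  then have "\<forall>t. a (Suc (Suc t)) = g (delayed (\<lambda>t. delayed u l a (Suc t)) l (\<lambda>t. a (Suc t)) t)
      (delayed (\<lambda>t. delayed v r a (Suc t)) r (\<lambda>t. a (Suc t)) t)"
    unfolding delayed_shift by blast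
  then show ?thesis
    unfolding trajectory_def by blast
qed

lemma delayed_recurrence_unique:
  assumes "0 < l" "0 < r"
    and "\<And>t. a (Suc t) = g (delayed u l a t) (delayed v r a t)"
    and "\<And>t. b (Suc t) = g (delayed u' l b t) (delayed v' r b t)"
    and "\<And>t. Suc t < l \<Longrightarrow> u t = u' t" "\<And>t. Suc t < r \<Longrightarrow> v t = v' t" "a 0 = b 0"
  shows "a = b"
proof
  fix t show "a t = b t"
  proof (induction t rule: less_induct)
    case (less t)
    show ?case
    proof (cases t)
      case (Suc s)
      have "delayed u l a s = delayed u' l b s" "delayed v r a s = delayed v' r b s"
        unfolding delayed_def using less Suc assms(1,2,5,6) by auto
      then show ?thesis
        using assms(3,4) Suc by simp
    qed (use assms(7) in simp)
  qed
qed

lemma synchronizing_fixed_point: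
  assumes sync: "synchronizing l r g k" and "max l r - 1 \<le> k" "0 < l" "0 < r"
  shows "\<exists>e. g e e = e"
proof -
  let ?L = "max l r"
  define a where "a = run l r g True (\<lambda>_. True) (\<lambda>_. True)"
  have traj: "trajectory l r g a"
    using trajectory_run assms a_def by blast
  then have "window_eq ?L k a (\<lambda>t. a (Suc t))"
    using sync trajectory_shift unfolding synchronizing_def by blast
  then have step: "a (Suc k - Suc j) = a (Suc k - j)" if "j < ?L" for j
    using that assms(2) unfolding window_eq_def by (simp add: Suc_diff_le)
  have const: "a (Suc k - i) = a (Suc k)" if "i \<le> ?L" for i
    using that by (induction i) (use step in auto)
  have "a (Suc k) = g (a (Suc k - l)) (a (Suc k - r))"
    using trajectory_step[OF traj] assms by simp
  then have "g (a (Suc k)) (a (Suc k)) = a (Suc k)"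
    using const[of l] const[of r] by simp
  then show ?thesis by blast
qed

lemma synchronizing_not_two_fixed_points:
  assumes "synchronizing l r g k" "0 < l"
  shows "\<not> (g True True = True \<and> g False False = False)"
proof
  assume "g True True = True \<and> g False False = False"
  then have "window_eq (max l r) k (\<lambda>_. True) (\<lambda>_. False)"
    using assms(1) trajectory_const unfolding synchronizing_def by metis
  then show False
    using assms(2) unfolding window_eq_def by (auto dest: spec[of _ 0])
qed

lemma synchronizing_equal_delays:
  assumes "2 \<le> r" "depends_on_both g" "\<And>e. g e e = c"
  shows "synchronizing r r g (2 * r - 1) \<and> \<not> synchronizing r r g (2 * r - 2)"
proof
  have tail: "a t = c" if "trajectory r r g a" "r \<le> t" for a t
    using trajectory_step[OF that(1), of t] that assms by simp
  show "synchronizing r r g (2 * r - 1)"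
    unfolding synchronizing_def window_eq_def
  proof (intro allI impI)
    fix a b j assume "trajectory r r g a" "trajectory r r g b" "j < max r r"
    then show "a (2 * r - 1 - j) = b (2 * r - 1 - j)"
      using tail[of a] tail[of b] by simp
  qed
  obtain u v where uv: "g u v \<noteq> c"
    using assms(2,3) unfolding depends_on_both_def by metis
  define a where "a = run r r g c (\<lambda>_. u) (\<lambda>_. v)"
  have "r - 1 = Suc (r - 2)" "\<not> r \<le> Suc (r - 2)"
    using assms(1) by auto
  then have "a (r - 1) \<noteq> c"
    using uv unfolding a_def by simp
  moreover have "trajectory r r g a" "trajectory r r g (\<lambda>_. c)"
    using trajectory_run trajectory_const assms a_def by auto
  moreover have "2 * r - 2 - (r - 1) = r - 1" "r - 1 < r"
    using assms(1) by auto
  ultimately show "\<not> synchronizing r r g (2 * r - 2)"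
    unfolding synchronizing_def window_eq_def by (metis max.idem)
qed

text \<open>A xor rule can be solved for its second argument, so agreement propagates backwards.\<close>
lemma xor_window_eq_backward:
  assumes "0 < l" "l < r" "\<And>u v. g u v = ((u \<noteq> v) \<noteq> c)"
    and traj: "trajectory l r g a" "trajectory l r g b"
    and "r \<le> Suc t" and win: "window_eq r (Suc t) a b"
  shows "window_eq r t a b"
  unfolding window_eq_def
proof (intro allI impI)
  fix j assume "j < r"
  show "a (t - j) = b (t - j)"
  proof (cases "Suc j < r")
    case True
    then have "a (Suc t - Suc j) = b (Suc t - Suc j)"
      using win unfolding window_eq_def by blast
    then show ?thesis by simp
  next
    case False
    then have j: "t - j = Suc t - r" using \<open>j < r\<close> by simp
    have "a (Suc t - 0) = b (Suc t - 0)" "a (Suc t - l) = b (Suc t - l)"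
      using win assms(1,2) unfolding window_eq_def by blast+
    moreover have "a (Suc t) = g (a (Suc t - l)) (a (Suc t - r))"
      "b (Suc t) = g (b (Suc t - l)) (b (Suc t - r))"
      using trajectory_step[OF traj(1)] trajectory_step[OF traj(2)] assms by auto
    ultimately show ?thesis
      unfolding j assms(3) by auto
  qed
qed

lemma xor_not_synchronizing:
  assumes "0 < l" "l < r" "\<And>u v. g u v = ((u \<noteq> v) \<noteq> c)" "r - 1 \<le> k"
  shows "\<not> synchronizing l r g k"
proof
  assume sync: "synchronizing l r g k"
  define a where "a = run l r g True (\<lambda>_. False) (\<lambda>_. False)"
  define b where "b = run l r g False (\<lambda>_. False) (\<lambda>_. False)"
  have traj: "trajectory l r g a" "trajectory l r g b"
    using trajectory_run assms a_def b_def by auto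
  have "window_eq r t a b \<Longrightarrow> window_eq r (r - 1) a b" if "r - 1 \<le> t" for t
    using that
  proof (induction t rule: dec_induct)
    case (step t)
    then show ?case
      using xor_window_eq_backward[OF assms(1-3) traj] by simp
  qed
  moreover have "window_eq r k a b"
    using sync traj assms(2) unfolding synchronizing_def by (simp add: max_def)
  ultimately have "window_eq r (r - 1) a b"
    using assms(4) by blast
  moreover have "r - 1 < r"
    using assms(2) by simp
  ultimately have "a (r - 1 - (r - 1)) = b (r - 1 - (r - 1))"
    unfolding window_eq_def by blast
  then show False
    unfolding a_def b_def by simp
qed

lemma periodic_not_synchronizing:
  assumes "0 < m" "m \<le> max l r" "max l r - 1 \<le> k" "g c c = c"
    and "trajectory l r g (\<lambda>t. if m dvd t then \<not> c else c)"
  shows "\<not> synchronizing l r g k"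
proof
  assume "synchronizing l r g k"
  then have "window_eq (max l r) k (\<lambda>t. if m dvd t then \<not> c else c) (\<lambda>_. c)"
    using assms(4,5) trajectory_const unfolding synchronizing_def by blast
  moreover have "k mod m < max l r"
    using assms(1,2) by (meson mod_less_divisor order_less_le_trans)
  moreover have "m dvd k - k mod m"
    by (simp add: minus_mod_eq_mult_div)
  ultimately show False
    unfolding window_eq_def by (metis (full_types))
qed

lemma trajectory_period_r:
  assumes "0 < l" "l < r" "\<And>u v. g u v = (if u = c \<and> v = (\<not> c) then \<not> c else c)"
  shows "trajectory l r g (\<lambda>t. if r dvd t then \<not> c else c)"
  unfolding trajectory_def
proof (intro exI allI)
  fix t
  let ?a = "\<lambda>t. if r dvd t then \<not> c else c"
  have "\<not> r dvd Suc t - l" if "r dvd Suc t" "l \<le> Suc t"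
  proof
    assume "r dvd Suc t - l"
    then have "r dvd l"
      using dvd_diff_nat[OF that(1)] that(2) by (metis diff_diff_cancel)
    then show False
      using assms(1,2) nat_dvd_not_less by blast
  qed
  moreover have "\<not> r dvd Suc t" if "\<not> r \<le> Suc t"
    using that nat_dvd_not_less by auto
  moreover have "r dvd Suc t - r \<longleftrightarrow> r dvd Suc t" if "r \<le> Suc t"
    using that by (simp add: dvd_minus_self)
  ultimately show "?a (Suc t) = g (delayed (\<lambda>_. c) l ?a t) (delayed (\<lambda>_. c) r ?a t)"
    unfolding delayed_def assms(3) using assms(2) by auto
qed

lemma trajectory_period_l:
  assumes "0 < l" "\<not> l dvd r" "\<And>u v. g u v = (if u = (\<not> c) \<and> v = c then \<not> c else c)"
  shows "trajectory l r g (\<lambda>t. if l dvd t then \<not> c else c)"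
  unfolding trajectory_def
proof (intro exI allI)
  fix t
  let ?a = "\<lambda>t. if l dvd t then \<not> c else c"
  have "\<not> l dvd Suc t - r" if "l dvd Suc t" "r \<le> Suc t"
  proof
    assume "l dvd Suc t - r"
    then have "l dvd r"
      using dvd_diff_nat[OF that(1)] that(2) by (metis diff_diff_cancel)
    then show False
      using assms(2) by blast
  qed
  moreover have "\<not> l dvd Suc t" if "\<not> l \<le> Suc t"
    using that nat_dvd_not_less by auto
  moreover have "l dvd Suc t - l \<longleftrightarrow> l dvd Suc t" if "l \<le> Suc t"
    using that by (simp add: dvd_minus_self)
  ultimately show "?a (Suc t) = g (delayed (\<lambda>_. c) l ?a t) (delayed (\<lambda>_. c) r ?a t)"
    unfolding delayed_def assms(3) by auto
qed

lemma synchronizing_dvd: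
  assumes "0 < l" "l \<le> r" "l dvd r" "\<And>u v. g u v = (if u = (\<not> c) \<and> v = c then \<not> c else c)"
  shows "synchronizing l r g (2 * r - 1)"
proof -
  have step_back: "a (t - l) \<noteq> c" if traj: "trajectory l r g a" and "a t \<noteq> c" "l \<le> t"
    for a t
  proof -
    obtain u v where "a t = g u v" "u = a (t - l)"
      using trajectoryE[OF traj, of t] \<open>l \<le> t\<close> assms(1) by (metis less_le_trans)
    then show ?thesis
      using \<open>a t \<noteq> c\<close> assms(4) by (auto split: if_splits)
  qed
  have tail: "a t = c" if traj: "trajectory l r g a" and "r \<le> t" for a t
  proof (rule ccontr)
    assume "a t \<noteq> c"
    obtain m where m: "r = m * l"
      using assms(3) by (metis dvd_def mult.commute)
    have "a (t - i * l) \<noteq> c" if "i \<le> m" for i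
      using that
    proof (induction i)
      case (Suc i)
      have "i * l + l \<le> t"
        using Suc.prems mult_le_mono1[OF Suc.prems, of l] m \<open>r \<le> t\<close> by simp
      then have "a (t - i * l - l) \<noteq> c"
        using step_back[OF traj, of "t - i * l"] Suc by simp
      then show ?case
        by (simp add: diff_diff_add add.commute)
    qed (use \<open>a t \<noteq> c\<close> in simp)
    then have "a (t - r) \<noteq> c"
      using m by blast
    moreover have "a t = g (a (t - l)) (a (t - r))"
      using trajectory_step[OF traj] assms(1,2) \<open>r \<le> t\<close> by simp
    ultimately show False
      using \<open>a t \<noteq> c\<close> assms(4) by auto
  qed
  show ?thesis
    unfolding synchronizing_def window_eq_def
  proof (intro allI impI)
    fix a b j assume "trajectory l r g a" "trajectory l r g b" "j < max l r"
    then show "a (2 * r - 1 - j) = b (2 * r - 1 - j)"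
      using tail[of a] tail[of b] assms(2) by simp
  qed
qed

lemma not_synchronizing_2r_minus_2:
  assumes "0 < l" "l < r" "\<And>u v. g u v = (if u = (\<not> c) \<and> v = c then \<not> c else c)"
  shows "\<not> synchronizing l r g (2 * r - 2)"
proof
  assume sync: "synchronizing l r g (2 * r - 2)"
  define a where "a = run l r g (\<not> c) (\<lambda>_. \<not> c) (\<lambda>_. c)"
  \<comment> \<open>the shorter cycle feeds \<open>\<not> c\<close> and the longer one \<open>c\<close>: the root stays \<open>\<not> c\<close> until time \<open>r\<close>\<close>
  have prefix: "a t = (\<not> c)" if "t < r" for t
    using that
  proof (induction t rule: less_induct)
    case (less t)
    show ?case
    proof (cases t)
      case (Suc s)
      have "a (Suc s) = g (if 0 < l \<and> l \<le> Suc s then a (Suc s - l) else \<not> c)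
          (if 0 < r \<and> r \<le> Suc s then a (Suc s - r) else c)"
        unfolding a_def by simp
      then show ?thesis
        using less Suc assms by simp
    qed (simp add: a_def)
  qed
  have "window_eq r (2 * r - 2) a (\<lambda>_. c)"
    using sync trajectory_run[of l r g] trajectory_const[of g c] assms
    unfolding synchronizing_def a_def by (simp add: max_def)
  moreover have "r - 1 < r" "2 * r - 2 - (r - 1) = r - 1"
    using assms(2) by auto
  ultimately have "a (r - 1) = c"
    unfolding window_eq_def by metis
  then show False
    using prefix[of "r - 1"] assms(2) by simp
qed

lemma synchronizing_diagonal:
  assumes "synchronizing l r g k" "max l r - 1 \<le> k" "0 < l" "0 < r"
  obtains c where "g c c = c" "g (\<not> c) (\<not> c) = c"
proof -
  obtain e where e: "g e e = e"
    using synchronizing_fixed_point[OF assms] by blast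
  have "\<not> (g True True = True \<and> g False False = False)"
    using synchronizing_not_two_fixed_points[OF assms(1,3)] .
  then show thesis
    using that[of e] e by (cases e) auto
qed

lemma synchronizing_classification_le:
  assumes "0 < l" "l \<le> r" "2 \<le> r" "depends_on_both g" "r - 1 \<le> k" "synchronizing l r g k"
  shows "l dvd r \<and> synchronizing l r g (2 * r - 1) \<and> \<not> synchronizing l r g (2 * r - 2)"
proof -
  obtain c where diag: "g c c = c" "g (\<not> c) (\<not> c) = c"
    using synchronizing_diagonal[OF assms(6)] assms(1,2,5) by (auto simp: max_def)
  show ?thesis
  proof (cases "l = r")
    case True
    have "g e e = c" for e
      using diag by (cases "e = c") auto
    then show ?thesis
      using synchronizing_equal_delays[OF assms(3,4)] True by simp
  next
    case False
    then have "l < r"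
      using assms(2) by simp
    have "\<not> (g c (\<not> c) = c \<and> g (\<not> c) c = c)"
    proof
      assume "g c (\<not> c) = c \<and> g (\<not> c) c = c"
      then have "g u v = c" for u v
        using diag by (cases "u = c"; cases "v = c") auto
      then show False
        using assms(4) unfolding depends_on_both_def by simp
    qed
    then consider (xor) "g c (\<not> c) = (\<not> c)" "g (\<not> c) c = (\<not> c)"
      | (long) "g c (\<not> c) = (\<not> c)" "g (\<not> c) c = c"
      | (short) "g c (\<not> c) = c" "g (\<not> c) c = (\<not> c)"
      by auto
    then show ?thesis
    proof cases
      case xor
      with diag have g: "g u v = ((u \<noteq> v) \<noteq> c)" for u v
        by (cases "u = c"; cases "v = c") auto
      have "\<not> synchronizing l r g k"
        by (rule xor_not_synchronizing[OF assms(1) \<open>l < r\<close> g assms(5)])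
      then show ?thesis
        using assms(6) by contradiction
    next
      case long
      with diag have "g u v = (if u = c \<and> v = (\<not> c) then \<not> c else c)" for u v
        by (cases "u = c"; cases "v = c") auto
      then have "trajectory l r g (\<lambda>t. if r dvd t then \<not> c else c)"
        using trajectory_period_r[OF assms(1) \<open>l < r\<close>] by blast
      then have "\<not> synchronizing l r g k"
        using periodic_not_synchronizing[of r l r k g c] diag(1) assms(1,2,5) by (simp add: max_def)
      then show ?thesis
        using assms(6) by contradiction
    next
      case short
      with diag have g: "g u v = (if u = (\<not> c) \<and> v = c then \<not> c else c)" for u v
        by (cases "u = c"; cases "v = c") auto
      show ?thesis
      proof (cases "l dvd r")
        case True
        then show ?thesis
          using synchronizing_dvd[OF assms(1,2) True g]
            not_synchronizing_2r_minus_2[OF assms(1) \<open>l < r\<close> g] by blast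
      next
        case False
        have "\<not> synchronizing l r g k"
          using periodic_not_synchronizing[of l l r k g c] trajectory_period_l[OF assms(1) False g]
            diag(1) assms(1,2,5) by (simp add: max_def)
        then show ?thesis
          using assms(6) by contradiction
      qed
    qed
  qed
qed

lemma synchronizing_classification:
  assumes "0 < l" "0 < r" "\<not> (l = 1 \<and> r = 1)" "depends_on_both g" "max l r - 1 \<le> k"
    and "synchronizing l r g k"
  shows "min l r dvd max l r \<and> synchronizing l r g (2 * max l r - 1)
    \<and> \<not> synchronizing l r g (2 * max l r - 2)"
proof (cases "l \<le> r")
  case True
  then have "2 \<le> r"
    using assms(1-3) by linarith
  then show ?thesis
    using synchronizing_classification_le[OF assms(1) True _ assms(4) _ assms(6)] assms(5) True
    by (simp add: max_def min_def)
next
  case False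
  then have "2 \<le> l"
    using assms(2) by linarith
  moreover have "synchronizing r l (\<lambda>u v. g v u) k" "depends_on_both (\<lambda>u v. g v u)"
    using assms(4,6) synchronizing_swap depends_on_both_swap by blast+
  ultimately show ?thesis
    using synchronizing_classification_le[OF assms(2), of l "\<lambda>u v. g v u" k] assms(5) False
      synchronizing_swap[of l r g] by (simp add: max_def min_def)
qed

definition shorter_and_not_longer :: "nat \<Rightarrow> nat \<Rightarrow> bool \<Rightarrow> bool \<Rightarrow> bool" where
  "shorter_and_not_longer l r u v = (if l \<le> r then u \<and> \<not> v else v \<and> \<not> u)"

lemma depends_on_both_shorter_and_not_longer: "depends_on_both (shorter_and_not_longer l r)"
  unfolding depends_on_both_def shorter_and_not_longer_def by auto

lemma synchronizing_shorter_and_not_longer: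
  assumes "0 < l" "0 < r" "min l r dvd max l r"
  shows "synchronizing l r (shorter_and_not_longer l r) (2 * max l r - 1)"
proof (cases "l \<le> r")
  case True
  then show ?thesis
    using synchronizing_dvd[where c = False, of l r] assms
    unfolding shorter_and_not_longer_def by (simp add: max_def min_def)
next
  case False
  then have "synchronizing r l (\<lambda>u v. u \<and> \<not> v) (2 * l - 1)"
    using synchronizing_dvd[where c = False, of r l] assms by (simp add: max_def min_def)
  then show ?thesis
    using False synchronizing_swap[of l r "shorter_and_not_longer l r"]
    unfolding shorter_and_not_longer_def by (simp add: max_def)
qed

section \<open>Interaction graphs\<close>

lemma conf_update: "x \<in> conf V \<Longrightarrow> k \<in> V \<Longrightarrow> x(k := b) \<in> conf V"
  unfolding conf_def by auto

lemma conf_False: "(\<lambda>_. False) \<in> conf V"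
  unfolding conf_def by simp

lemma eq_if_eq_on_in_neighbours:
  assumes "finite V" "x \<in> conf V" "y \<in> conf V" "i \<in> V"
    and "\<And>j. (j, i) \<in> interaction_graph V f \<Longrightarrow> x j = y j"
  shows "f x i = f y i"
proof -
  have "f x i = f y i"
    if "finite D" "x \<in> conf V" "{j. x j \<noteq> y j} \<subseteq> D" "\<forall>j\<in>D. (j, i) \<notin> interaction_graph V f"
    for D x
    using that
  proof (induction D arbitrary: x rule: finite_induct)
    case empty
    then show ?case by (simp add: fun_eq_iff)
  next
    case (insert j D)
    define x' where "x' = x(j := y j)"
    have "x' \<in> conf V"
      using insert.prems(1) assms(3) unfolding x'_def conf_def by auto
    moreover have "{j'. x' j' \<noteq> y j'} \<subseteq> D"
      using insert.prems(2) unfolding x'_def by auto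
    ultimately have "f x' i = f y i"
      using insert.IH insert.prems(3) by blast
    moreover have "f x i = f x' i"
    proof (cases "x j = y j")
      case True
      then show ?thesis unfolding x'_def by (simp add: fun_upd_idem)
    next
      case False
      then have "j \<in> V"
        using insert.prems(1) assms(3) unfolding conf_def by auto
      moreover have "x(j := \<not> x j) = x'"
        using False unfolding x'_def by auto
      ultimately show ?thesis
        using insert.prems assms(4) unfolding interaction_graph_def by auto
    qed
    ultimately show ?case by simp
  qed
  moreover have "{j. x j \<noteq> y j} \<subseteq> {j \<in> V. x j \<noteq> y j}"
    using assms(2,3) unfolding conf_def by auto
  ultimately show ?thesis
    using assms by auto
qed

lemma single_in_neighbour_value:
  assumes "finite V" "x \<in> conf V" "i \<in> V" "k \<in> V"
    and in_arc: "\<And>j. (j, i) \<in> interaction_graph V f \<longleftrightarrow> j = k"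
  shows "f x i = (x k \<noteq> f (\<lambda>_. False) i)"
proof -
  have local: "f y i = f ((\<lambda>_. False)(k := y k)) i" if "y \<in> conf V" for y
  proof (rule eq_if_eq_on_in_neighbours[OF assms(1) that _ assms(3)])
    show "(\<lambda>_. False)(k := y k) \<in> conf V"
      using conf_update[OF conf_False assms(4)] .
  qed (use in_arc in simp)
  obtain b where b: "b \<in> conf V" "f b i \<noteq> f (b(k := \<not> b k)) i"
    using in_arc[of k] unfolding interaction_graph_def by auto
  have off: "(\<lambda>_. False)(k := False) = (\<lambda>_. False)"
    by (simp add: fun_eq_iff)
  have "f b i = f ((\<lambda>_. False)(k := b k)) i" "f (b(k := \<not> b k)) i = f ((\<lambda>_. False)(k := \<not> b k)) i"
    using local[OF b(1)] local[OF conf_update[OF b(1) assms(4)]] by simp_all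
  then have "f ((\<lambda>_. False)(k := True)) i \<noteq> f (\<lambda>_. False) i"
    using b(2) off by (cases "b k") simp_all
  then show ?thesis
    using local[OF assms(2)] off by (cases "x k") simp_all
qed

lemma two_in_neighbours_value:
  assumes "finite V" "i \<in> V" "p \<in> V" "q \<in> V" "p \<noteq> q"
    and in_arc: "\<And>j. (j, i) \<in> interaction_graph V f \<longleftrightarrow> j = p \<or> j = q"
  defines "h \<equiv> \<lambda>u v. f ((\<lambda>_. False)(p := u, q := v)) i"
  shows "\<And>x. x \<in> conf V \<Longrightarrow> f x i = h (x p) (x q)" and "depends_on_both h"
proof -
  have conf_pq: "(\<lambda>_. False)(p := u, q := v) \<in> conf V" for u v
    using conf_update conf_False assms(3,4) by metis
  show local: "f x i = h (x p) (x q)" if "x \<in> conf V" for x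
    unfolding h_def
    by (rule eq_if_eq_on_in_neighbours[OF assms(1) that conf_pq assms(2)])
      (use in_arc assms(5) in auto)
  obtain b where b: "b \<in> conf V" "f b i \<noteq> f (b(p := \<not> b p)) i"
    using in_arc[of p] unfolding interaction_graph_def by auto
  then have "h (b p) (b q) \<noteq> h (\<not> b p) (b q)"
    using local[OF b(1)] local[OF conf_update[OF b(1) assms(3)]] assms(5) by auto
  then have "\<exists>v. h True v \<noteq> h False v"
    by (cases "b p") auto
  obtain c where c: "c \<in> conf V" "f c i \<noteq> f (c(q := \<not> c q)) i"
    using in_arc[of q] unfolding interaction_graph_def by auto
  then have "h (c p) (c q) \<noteq> h (c p) (\<not> c q)"
    using local[OF c(1)] local[OF conf_update[OF c(1) assms(4)]] assms(5) by auto
  then have "\<exists>u. h u True \<noteq> h u False"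
    by (cases "c q") auto
  with \<open>\<exists>v. h True v \<noteq> h False v\<close> show "depends_on_both h"
    unfolding depends_on_both_def by blast
qed

lemma in_neighbours_of_copy:
  assumes "i \<in> V" "k \<in> V" "\<And>x. x \<in> conf V \<Longrightarrow> f x i = (x k \<noteq> s)"
  shows "(j, i) \<in> interaction_graph V f \<longleftrightarrow> j = k"
proof
  assume "(j, i) \<in> interaction_graph V f"
  then obtain b where "b \<in> conf V" "f b i \<noteq> f (b(j := \<not> b j)) i" "j \<in> V"
    unfolding interaction_graph_def by auto
  then show "j = k"
    using assms(3) conf_update by (metis fun_upd_other)
next
  assume "j = k"
  then show "(j, i) \<in> interaction_graph V f"
    using assms conf_False conf_update unfolding interaction_graph_def by fastforce
qed

lemma in_neighbours_of_binary:
  assumes "i \<in> V" "p \<in> V" "q \<in> V" "p \<noteq> q" "depends_on_both h"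
    and "\<And>x. x \<in> conf V \<Longrightarrow> f x i = h (x p) (x q)"
  shows "(j, i) \<in> interaction_graph V f \<longleftrightarrow> j = p \<or> j = q"
proof
  assume "(j, i) \<in> interaction_graph V f"
  then obtain b where "b \<in> conf V" "f b i \<noteq> f (b(j := \<not> b j)) i" "j \<in> V"
    unfolding interaction_graph_def by auto
  then show "j = p \<or> j = q"
    using assms(6) conf_update by (metis fun_upd_other)
next
  have arc: "(j, i) \<in> interaction_graph V f"
    if "j \<in> V" "a \<in> conf V" "f a i \<noteq> f (a(j := \<not> a j)) i" for a j
    using that assms(1) unfolding interaction_graph_def by blast
  obtain u v where uv: "h True v \<noteq> h False v" "h u True \<noteq> h u False"
    using assms(5) unfolding depends_on_both_def by blast
  have conf_p: "(\<lambda>_. False)(p := w) \<in> conf V" and conf_q: "(\<lambda>_. False)(q := w) \<in> conf V" for w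
    using conf_update conf_False assms(2,3) by metis+
  have "f ((\<lambda>_. False)(q := v)) i \<noteq> f ((\<lambda>_. False)(q := v, p := True)) i"
    using uv(1) assms(4,6) conf_q conf_update[OF conf_q assms(2)] by auto
  then have "(p, i) \<in> interaction_graph V f"
    using arc[OF assms(2) conf_q] assms(4) by (simp add: fun_upd_other)
  moreover have "f ((\<lambda>_. False)(p := u)) i \<noteq> f ((\<lambda>_. False)(p := u, q := True)) i"
    using uv(2) assms(4,6) conf_p conf_update[OF conf_p assms(3)] by auto
  then have "(q, i) \<in> interaction_graph V f"
    using arc[OF assms(3) conf_p] assms(4) by (simp add: fun_upd_other)
  ultimately show "j = p \<or> j = q \<Longrightarrow> (j, i) \<in> interaction_graph V f"
    by blast
qed

lemma const_iter_mono:
  assumes "boolfun V f" "const_iter V f k" "k \<le> k'"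
  shows "const_iter V f k'"
  using assms(3)
proof (induction k' rule: dec_induct)
  case (step m)
  then obtain c where "\<forall>x\<in>conf V. (f ^^ m) x = c"
    unfolding const_iter_def by blast
  then have "\<forall>x\<in>conf V. (f ^^ Suc m) x = c"
    using assms(1) unfolding boolfun_def by (simp add: funpow_Suc_right del: funpow.simps)
  then show ?case
    unfolding const_iter_def by blast
qed (rule assms(2))

lemma nil_class_eq_Suc:
  assumes "boolfun V f" "const_iter V f (Suc n)" "\<not> const_iter V f n"
  shows "nil_class V f = Suc n"
  unfolding nil_class_def
proof (rule Least_equality)
  show "\<And>m. const_iter V f m \<Longrightarrow> Suc n \<le> m"
    using const_iter_mono[OF assms(1)] assms(3) by (meson not_less_eq_eq)
qed (rule assms(2))

section \<open>The double cycle\<close>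

definition pred_vertex :: "nat \<Rightarrow> nat \<Rightarrow> nat" where
  "pred_vertex l i = (if i = l then 0 else i - 1)"

definition second_cycle_vertex :: "nat \<Rightarrow> nat \<Rightarrow> nat" where
  "second_cycle_vertex l j = (if j = 0 then 0 else l + j - 1)"

lemma Suc_mod_length: "k < n \<Longrightarrow> Suc k mod n = (if Suc k = n then 0 else Suc k)"
  by (cases "Suc k = n") auto

lemma cycle_arcs_iff:
  "(j, i) \<in> cycle_arcs vs \<longleftrightarrow>
     (\<exists>k < length vs. j = vs ! k \<and> i = vs ! (if Suc k = length vs then 0 else Suc k))"
  unfolding cycle_arcs_def by (auto simp: Suc_mod_length)

lemma first_cycle_arc_iff:
  "(j, i) \<in> cycle_arcs [0..<l] \<longleftrightarrow> j < l \<and> i = (if Suc j = l then 0 else Suc j)"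
proof -
  have "(j, i) \<in> cycle_arcs [0..<l] \<longleftrightarrow>
      (\<exists>k < l. j = k \<and> i = (if Suc k = l then 0 else Suc k))"
    unfolding cycle_arcs_iff length_upt by (intro ex_cong1 conj_cong refl) simp_all
  then show ?thesis
    by blast
qed

lemma second_cycle_arc_iff:
  assumes "0 < r"
  shows "(j, i) \<in> cycle_arcs (0 # [l..<l + r - 1]) \<longleftrightarrow>
    (\<exists>k < r. j = second_cycle_vertex l k \<and>
      i = (if Suc k = r then 0 else second_cycle_vertex l (Suc k)))"
proof -
  have nth: "(0 # [l..<l + r - 1]) ! k = second_cycle_vertex l k" if "k < r" for k
    using that by (cases k) (auto simp: second_cycle_vertex_def)
  have nth_next: "(0 # [l..<l + r - 1]) ! (if Suc k = r then 0 else Suc k)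
      = (if Suc k = r then 0 else second_cycle_vertex l (Suc k))" if "k < r" for k
    using that nth[of "Suc k"] by auto
  have "length (0 # [l..<l + r - 1]) = r"
    using assms by simp
  then show ?thesis
    unfolding cycle_arcs_iff by (intro ex_cong1 conj_cong refl) (simp_all only: nth nth_next)
qed

lemma double_cycle_arc_iff:
  assumes "0 < l" "0 < r"
  shows "(j, i) \<in> double_cycle l r \<longleftrightarrow>
    i = 0 \<and> (j = l - 1 \<or> j = second_cycle_vertex l (r - 1))
    \<or> 0 < i \<and> i < l + r - 1 \<and> j = pred_vertex l i"
  (is "_ \<longleftrightarrow> ?root \<or> ?other")
proof
  assume "(j, i) \<in> double_cycle l r"
  then consider "(j, i) \<in> cycle_arcs [0..<l]" | k where "k < r" "j = second_cycle_vertex l k"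
      "i = (if Suc k = r then 0 else second_cycle_vertex l (Suc k))"
    unfolding double_cycle_def using second_cycle_arc_iff[OF assms(2)] by auto
  then show "?root \<or> ?other"
  proof cases
    case 1
    then show ?thesis
      using assms(2) unfolding first_cycle_arc_iff pred_vertex_def by auto
  next
    case 2
    then show ?thesis
      unfolding second_cycle_vertex_def pred_vertex_def by (cases "Suc k = r") auto
  qed
next
  have first_arc: "(j, i) \<in> double_cycle l r" if "j < l" "i = (if Suc j = l then 0 else Suc j)"
    using that by (simp add: double_cycle_def first_cycle_arc_iff)
  have second_arc: "(j, i) \<in> double_cycle l r" if "k < r" "j = second_cycle_vertex l k"
      "i = (if Suc k = r then 0 else second_cycle_vertex l (Suc k))" for k
    using that second_cycle_arc_iff[OF assms(2)] unfolding double_cycle_def by blast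
  assume "?root \<or> ?other"
  then consider "i = 0" "j = l - 1" | "i = 0" "j = second_cycle_vertex l (r - 1)"
    | "0 < i" "i < l" "j = i - 1" | "l \<le> i" "i < l + r - 1" "j = pred_vertex l i"
    unfolding pred_vertex_def by (cases "i < l") (auto simp: not_less)
  then show "(j, i) \<in> double_cycle l r"
  proof cases
    case 1
    then show ?thesis by (intro first_arc) (use assms(1) in auto)
  next
    case 2
    then show ?thesis by (intro second_arc[of "r - 1"]) (use assms(2) in auto)
  next
    case 3
    then show ?thesis by (intro first_arc) auto
  next
    case 4
    then show ?thesis
      by (intro second_arc[of "i - l"]) (auto simp: second_cycle_vertex_def pred_vertex_def)
  qed
qed

primrec xor_prefix :: "(nat \<Rightarrow> bool) \<Rightarrow> nat \<Rightarrow> bool" where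
  "xor_prefix s 0 = False"
| "xor_prefix s (Suc j) = (xor_prefix s j \<noteq> s (Suc j))"

locale double_cycle_network =
  fixes l r :: nat and f :: "(nat \<Rightarrow> bool) \<Rightarrow> nat \<Rightarrow> bool"
  assumes pos_l: "0 < l" and pos_r: "0 < r" and not_two_loops: "\<not> (l = 1 \<and> r = 1)"
    and admits: "admits {..<l + r - 1} (double_cycle l r) f"
begin

abbreviation "V \<equiv> {..<l + r - 1}"
abbreviation "p \<equiv> l - 1"
abbreviation "q \<equiv> second_cycle_vertex l (r - 1)"

definition flip :: "nat \<Rightarrow> bool" where
  "flip i = f (\<lambda>_. False) i"

definition flips_first :: "nat \<Rightarrow> bool" where
  "flips_first = xor_prefix flip"

definition flips_second :: "nat \<Rightarrow> bool" where
  "flips_second = xor_prefix (\<lambda>j. flip (second_cycle_vertex l j))"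

definition root_rule :: "bool \<Rightarrow> bool \<Rightarrow> bool" where
  "root_rule u v = f ((\<lambda>_. False)(p := u, q := v)) 0"

text \<open>The root rule read in coordinates in which the negations accumulated along the cycles are
  undone.\<close>
definition g :: "bool \<Rightarrow> bool \<Rightarrow> bool" where
  "g u v = root_rule (u \<noteq> flips_first (l - 1)) (v \<noteq> flips_second (r - 1))"

definition orbit :: "(nat \<Rightarrow> bool) \<Rightarrow> nat \<Rightarrow> nat \<Rightarrow> bool" where
  "orbit x t = (f ^^ t) x"

definition root_seq :: "(nat \<Rightarrow> bool) \<Rightarrow> nat \<Rightarrow> bool" where
  "root_seq x t = orbit x t 0"

lemma boolfun: "boolfun V f"
  using admits unfolding admits_def by simp

lemma p_q: "p \<in> V" "q \<in> V" "p \<noteq> q"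
  using pos_l pos_r not_two_loops unfolding second_cycle_vertex_def by auto

lemma in_arc_iff:
  "(j, i) \<in> interaction_graph V f \<longleftrightarrow>
    i = 0 \<and> (j = p \<or> j = q) \<or> 0 < i \<and> i < l + r - 1 \<and> j = pred_vertex l i"
  using admits double_cycle_arc_iff[OF pos_l pos_r] unfolding admits_def by simp

lemma f_nonroot:
  assumes "x \<in> conf V" "0 < i" "i < l + r - 1"
  shows "f x i = (x (pred_vertex l i) \<noteq> flip i)"
  unfolding flip_def
proof (rule single_in_neighbour_value)
  show "pred_vertex l i \<in> V"
    using assms(2,3) unfolding pred_vertex_def by auto
qed (use assms in_arc_iff in auto)

lemma f_root: "x \<in> conf V \<Longrightarrow> f x 0 = root_rule (x p) (x q)"
  and depends_on_both_root_rule: "depends_on_both root_rule"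
  unfolding root_rule_def using two_in_neighbours_value[OF _ _ p_q] in_arc_iff pos_l pos_r by auto

lemma depends_on_both_g: "depends_on_both g"
proof -
  obtain u v where "root_rule True v \<noteq> root_rule False v" "root_rule u True \<noteq> root_rule u False"
    using depends_on_both_root_rule unfolding depends_on_both_def by blast
  then have "g True (v \<noteq> flips_second (r - 1)) \<noteq> g False (v \<noteq> flips_second (r - 1))"
      "g (u \<noteq> flips_first (l - 1)) True \<noteq> g (u \<noteq> flips_first (l - 1)) False"
    unfolding g_def by (cases "flips_first (l - 1)"; cases "flips_second (r - 1)"; simp)+
  then show ?thesis
    unfolding depends_on_both_def by blast
qed

lemma orbit_conf: "x \<in> conf V \<Longrightarrow> orbit x t \<in> conf V"
  unfolding orbit_def by (induction t) (use boolfun in \<open>auto simp: boolfun_def\<close>)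

lemma orbit_Suc: "orbit x (Suc t) = f (orbit x t)"
  unfolding orbit_def by simp

lemma orbit_along_path:
  assumes x: "x \<in> conf V" and "v 0 = 0"
    and path: "\<And>j. 0 < j \<Longrightarrow> j < m \<Longrightarrow> 0 < v j \<and> v j < l + r - 1 \<and> pred_vertex l (v j) = v (j - 1)"
    and "j < m"
  defines "S \<equiv> xor_prefix (\<lambda>k. flip (v k))"
  shows "orbit x t (v j) =
    (if j \<le> t then root_seq x (t - j) \<noteq> S j else (x (v (j - t)) \<noteq> S j) \<noteq> S (j - t))"
  using \<open>j < m\<close>
proof (induction t arbitrary: j)
  case 0
  then show ?case
    using \<open>v 0 = 0\<close> unfolding root_seq_def orbit_def S_def by auto
next
  case (Suc t)
  show ?case
  proof (cases j)
    case 0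
    then show ?thesis
      using \<open>v 0 = 0\<close> unfolding root_seq_def S_def by simp
  next
    case (Suc i)
    then have "0 < v j" "v j < l + r - 1" "pred_vertex l (v j) = v i"
      using path[of j] Suc.prems by auto
    then have step: "orbit x (Suc t) (v j) = (orbit x t (v i) \<noteq> flip (v j))"
      unfolding orbit_Suc using f_nonroot[OF orbit_conf[OF x]] by simp
    have S: "S j = (S i \<noteq> flip (v j))"
      unfolding S_def \<open>j = Suc i\<close> by simp
    have IH: "orbit x t (v i) =
        (if i \<le> t then root_seq x (t - i) \<noteq> S i else (x (v (i - t)) \<noteq> S i) \<noteq> S (i - t))"
      using Suc.IH[of i] Suc.prems \<open>j = Suc i\<close> by simp
    show ?thesis
    proof (cases "i \<le> t")
      case True
      then show ?thesis
        using step S IH \<open>j = Suc i\<close> by auto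
    next
      case False
      then have "j - Suc t = i - t"
        using \<open>j = Suc i\<close> by simp
      then show ?thesis
        using step S IH \<open>j = Suc i\<close> False by auto
    qed
  qed
qed

lemma orbit_first_cycle:
  assumes "x \<in> conf V" "j < l"
  shows "orbit x t j =
    (if j \<le> t then root_seq x (t - j) \<noteq> flips_first j
     else (x (j - t) \<noteq> flips_first j) \<noteq> flips_first (j - t))"
proof -
  have "0 < k \<and> k < l + r - 1 \<and> pred_vertex l k = k - 1" if "0 < k" "k < l" for k
    using that pos_r unfolding pred_vertex_def by auto
  then show ?thesis
    using orbit_along_path[of x "\<lambda>k. k" l, OF assms(1)] assms(2) unfolding flips_first_def by simp
qed

lemma orbit_second_cycle:
  assumes "x \<in> conf V" "j < r"
  shows "orbit x t (second_cycle_vertex l j) =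
    (if j \<le> t then root_seq x (t - j) \<noteq> flips_second j
     else (x (second_cycle_vertex l (j - t)) \<noteq> flips_second j) \<noteq> flips_second (j - t))"
proof -
  have "0 < second_cycle_vertex l k \<and> second_cycle_vertex l k < l + r - 1
      \<and> pred_vertex l (second_cycle_vertex l k) = second_cycle_vertex l (k - 1)"
    if "0 < k" "k < r" for k
    using that pos_l unfolding pred_vertex_def second_cycle_vertex_def by auto
  moreover have "second_cycle_vertex l 0 = 0"
    unfolding second_cycle_vertex_def by simp
  ultimately show ?thesis
    using orbit_along_path[of x "second_cycle_vertex l" r, OF assms(1)] assms(2)
    unfolding flips_second_def by simp
qed

definition first_input :: "(nat \<Rightarrow> bool) \<Rightarrow> nat \<Rightarrow> bool" where
  "first_input x t = (x (l - 1 - t) \<noteq> flips_first (l - 1 - t))"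

definition second_input :: "(nat \<Rightarrow> bool) \<Rightarrow> nat \<Rightarrow> bool" where
  "second_input x t = (x (second_cycle_vertex l (r - 1 - t)) \<noteq> flips_second (r - 1 - t))"

lemma root_seq_Suc:
  assumes x: "x \<in> conf V"
  shows "root_seq x (Suc t) =
    g (delayed (first_input x) l (root_seq x) t) (delayed (second_input x) r (root_seq x) t)"
proof -
  have "orbit x t p = (delayed (first_input x) l (root_seq x) t \<noteq> flips_first (l - 1))"
  proof (cases "l \<le> Suc t")
    case True
    then have "l - 1 \<le> t" "t - (l - 1) = Suc t - l"
      using pos_l by auto
    then show ?thesis
      using orbit_first_cycle[OF x, of "l - 1" t] pos_l True
      unfolding delayed_def by simp
  next
    case False
    then show ?thesis
      using orbit_first_cycle[OF x, of "l - 1" t] pos_l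
      unfolding delayed_def first_input_def by auto
  qed
  moreover have "orbit x t q = (delayed (second_input x) r (root_seq x) t \<noteq> flips_second (r - 1))"
  proof (cases "r \<le> Suc t")
    case True
    then have "r - 1 \<le> t" "t - (r - 1) = Suc t - r"
      using pos_r by auto
    then show ?thesis
      using orbit_second_cycle[OF x, of "r - 1" t] pos_r True
      unfolding delayed_def by simp
  next
    case False
    then show ?thesis
      using orbit_second_cycle[OF x, of "r - 1" t] pos_r
      unfolding delayed_def second_input_def by auto
  qed
  moreover have "root_seq x (Suc t) = root_rule (orbit x t p) (orbit x t q)"
    unfolding root_seq_def orbit_Suc using f_root[OF orbit_conf[OF x]] .
  ultimately show ?thesis
    unfolding g_def by simp
qed

lemma trajectory_root_seq: "x \<in> conf V \<Longrightarrow> trajectory l r g (root_seq x)"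
  unfolding trajectory_def using root_seq_Suc by blast

text \<open>The inputs of a trajectory can be written into the initial contents of the two cycles.\<close>
lemma trajectory_imp_root_seq:
  assumes "trajectory l r g b"
  obtains x where "x \<in> conf V" "root_seq x = b"
proof -
  obtain u v where b: "\<And>t. b (Suc t) = g (delayed u l b t) (delayed v r b t)"
    using assms unfolding trajectory_def by blast
  define x where "x i =
    (if i = 0 then b 0
     else if i < l then u (l - 1 - i) \<noteq> flips_first i
     else if i < l + r - 1 then v (r - 1 - (i + 1 - l)) \<noteq> flips_second (i + 1 - l)
     else False)" for i
  have x: "x \<in> conf V"
    unfolding conf_def x_def using pos_l pos_r by auto
  have "u t = first_input x t" if "Suc t < l" for t
  proof -
    have "l - 1 - t \<noteq> 0" "l - 1 - t < l" "l - 1 - (l - 1 - t) = t"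
      using that by auto
    then show ?thesis
      unfolding first_input_def x_def by auto
  qed
  moreover have "v t = second_input x t" if "Suc t < r" for t
  proof -
    let ?j = "r - 1 - t"
    have "second_cycle_vertex l ?j = l + ?j - 1" "l + ?j - 1 \<noteq> 0" "\<not> l + ?j - 1 < l"
      "l + ?j - 1 < l + r - 1" "l + ?j - 1 + 1 - l = ?j" "r - 1 - ?j = t"
      using that pos_l unfolding second_cycle_vertex_def by auto
    then show ?thesis
      unfolding second_input_def x_def by auto
  qed
  moreover have "b 0 = root_seq x 0"
    unfolding root_seq_def orbit_def x_def by simp
  ultimately have "b = root_seq x"
    using delayed_recurrence_unique[OF pos_l pos_r b root_seq_Suc[OF x]] by blast
  then show thesis
    using that x by blast
qed

lemma orbit_eq_iff_window_eq:
  assumes x: "x \<in> conf V" and y: "y \<in> conf V" and k: "max l r - 1 \<le> k"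
  shows "orbit x k = orbit y k \<longleftrightarrow> window_eq (max l r) k (root_seq x) (root_seq y)"
proof
  assume eq: "orbit x k = orbit y k"
  show "window_eq (max l r) k (root_seq x) (root_seq y)"
    unfolding window_eq_def
  proof (intro allI impI)
    fix j assume j: "j < max l r"
    then have "j \<le> k"
      using k by simp
    show "root_seq x (k - j) = root_seq y (k - j)"
    proof (cases "j < l")
      case True
      then show ?thesis
        using orbit_first_cycle[OF x True, of k] orbit_first_cycle[OF y True, of k] eq \<open>j \<le> k\<close>
        by auto
    next
      case False
      then have "j < r"
        using j by simp
      then show ?thesis
        using orbit_second_cycle[OF x \<open>j < r\<close>, of k] orbit_second_cycle[OF y \<open>j < r\<close>, of k]
          eq \<open>j \<le> k\<close> by auto
    qed
  qed
next
  assume w: "window_eq (max l r) k (root_seq x) (root_seq y)"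
  show "orbit x k = orbit y k"
  proof
    fix i
    consider "i < l" | "l \<le> i" "i < l + r - 1" | "l + r - 1 \<le> i"
      by linarith
    then show "orbit x k i = orbit y k i"
    proof cases
      case 1
      then have "i < max l r" "i \<le> k"
        using k by auto
      then show ?thesis
        using orbit_first_cycle[OF x 1, of k] orbit_first_cycle[OF y 1, of k] w
        unfolding window_eq_def by simp
    next
      case 2
      let ?j = "i + 1 - l"
      have j: "?j < r" "second_cycle_vertex l ?j = i" "?j < max l r" "?j \<le> k"
        using 2 k pos_l unfolding second_cycle_vertex_def by auto
      then show ?thesis
        using orbit_second_cycle[OF x j(1), of k] orbit_second_cycle[OF y j(1), of k] w
        unfolding window_eq_def by simp
    next
      case 3
      then show ?thesis
        using orbit_conf[OF x, of k] orbit_conf[OF y, of k] unfolding conf_def by auto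
    qed
  qed
qed

lemma const_iter_iff_synchronizing:
  assumes k: "max l r - 1 \<le> k"
  shows "const_iter V f k \<longleftrightarrow> synchronizing l r g k"
proof
  assume "const_iter V f k"
  then obtain c where c: "\<forall>x\<in>conf V. orbit x k = c"
    unfolding const_iter_def orbit_def by blast
  show "synchronizing l r g k"
    unfolding synchronizing_def
  proof (intro allI impI)
    fix a b assume "trajectory l r g a" "trajectory l r g b"
    then obtain x y where "x \<in> conf V" "root_seq x = a" "y \<in> conf V" "root_seq y = b"
      using trajectory_imp_root_seq by metis
    then show "window_eq (max l r) k a b"
      using orbit_eq_iff_window_eq[OF _ _ k] c by metis
  qed
next
  assume sync: "synchronizing l r g k"
  have "(f ^^ k) x = orbit (\<lambda>_. False) k" if "x \<in> conf V" for x
    using orbit_eq_iff_window_eq[OF that conf_False k] sync trajectory_root_seq[OF that]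
      trajectory_root_seq[OF conf_False] unfolding synchronizing_def orbit_def by blast
  then show "const_iter V f k"
    unfolding const_iter_def by blast
qed

lemma nilpotent_class:
  assumes "nilpotent V f"
  shows "min l r dvd max l r \<and> nil_class V f = 2 * max l r - 1"
proof -
  obtain k where "const_iter V f k"
    using assms unfolding nilpotent_def by blast
  then have "const_iter V f (k + max l r)"
    using const_iter_mono[OF boolfun] by simp
  then have "synchronizing l r g (k + max l r)"
    using const_iter_iff_synchronizing by simp
  then have "min l r dvd max l r" "synchronizing l r g (2 * max l r - 1)"
      "\<not> synchronizing l r g (2 * max l r - 2)"
    using synchronizing_classification[OF pos_l pos_r not_two_loops depends_on_both_g,
        of "k + max l r"] by simp_all
  moreover have n: "2 * max l r - 1 = Suc (2 * max l r - 2)" and "max l r - 1 \<le> 2 * max l r - 2"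
    using pos_l by (auto simp: max_def)
  ultimately have "const_iter V f (Suc (2 * max l r - 2))" "\<not> const_iter V f (2 * max l r - 2)"
    using const_iter_iff_synchronizing by simp_all
  then show ?thesis
    using nil_class_eq_Suc[OF boolfun] n \<open>min l r dvd max l r\<close> by simp
qed

end

section \<open>A nilpotent function on the double cycle\<close>

definition and_not_network :: "nat \<Rightarrow> nat \<Rightarrow> (nat \<Rightarrow> bool) \<Rightarrow> nat \<Rightarrow> bool" where
  "and_not_network l r x i =
    (if i = 0 then shorter_and_not_longer l r (x (l - 1)) (x (second_cycle_vertex l (r - 1)))
     else if i < l + r - 1 then x (pred_vertex l i) else False)"

lemma admits_and_not_network:
  assumes "0 < l" "0 < r" "\<not> (l = 1 \<and> r = 1)"
  shows "admits {..<l + r - 1} (double_cycle l r) (and_not_network l r)"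
proof -
  let ?V = "{..<l + r - 1}" and ?q = "second_cycle_vertex l (r - 1)"
  have p_q: "l - 1 \<in> ?V" "?q \<in> ?V" "l - 1 \<noteq> ?q"
    using assms unfolding second_cycle_vertex_def by auto
  have "(j, i) \<in> interaction_graph ?V (and_not_network l r) \<longleftrightarrow> (j, i) \<in> double_cycle l r" for j i
  proof (cases "i = 0")
    case True
    have "(j, 0) \<in> interaction_graph ?V (and_not_network l r) \<longleftrightarrow> j = l - 1 \<or> j = ?q"
      using assms(1,2)
      by (intro in_neighbours_of_binary[OF _ p_q depends_on_both_shorter_and_not_longer])
        (auto simp: and_not_network_def)
    then show ?thesis
      using True double_cycle_arc_iff[OF assms(1,2)] by simp
  next
    case False
    show ?thesis
    proof (cases "i < l + r - 1")
      case True
      have "pred_vertex l i \<in> ?V"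
        using True False unfolding pred_vertex_def by auto
      then have "(j, i) \<in> interaction_graph ?V (and_not_network l r) \<longleftrightarrow> j = pred_vertex l i"
        using True False
        by (intro in_neighbours_of_copy[where s = False]) (auto simp: and_not_network_def)
      then show ?thesis
        using True False double_cycle_arc_iff[OF assms(1,2)] by auto
    next
      case outside: False
      then show ?thesis
        using False double_cycle_arc_iff[OF assms(1,2)] unfolding interaction_graph_def by auto
    qed
  qed
  moreover have "boolfun ?V (and_not_network l r)"
    using assms(1,2) unfolding boolfun_def conf_def and_not_network_def by auto
  ultimately show ?thesis
    unfolding admits_def by auto
qed

lemma nilpotent_and_not_network:
  assumes "0 < l" "0 < r" "\<not> (l = 1 \<and> r = 1)" "min l r dvd max l r"
  shows "nilpotent {..<l + r - 1} (and_not_network l r)"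
proof -
  interpret double_cycle_network l r "and_not_network l r"
    using assms(1-3) admits_and_not_network by unfold_locales
  have "flip i = False" for i
    unfolding flip_def and_not_network_def shorter_and_not_longer_def by auto
  then have "flips_first j = False" "flips_second j = False" for j
    unfolding flips_first_def flips_second_def by (induction j) auto
  moreover have "root_rule u v = shorter_and_not_longer l r u v" for u v
    using p_q(3) unfolding root_rule_def and_not_network_def by simp
  ultimately have "g = shorter_and_not_longer l r"
    unfolding g_def by (simp add: fun_eq_iff)
  then have "const_iter V (and_not_network l r) (2 * max l r - 1)"
    using const_iter_iff_synchronizing synchronizing_shorter_and_not_longer[OF assms(1,2,4)] by simp
  then show ?thesis
    unfolding nilpotent_def by blast
qed

theorem theorem3:
  fixes l r :: nat
  assumes "l \<ge> 1" and "r \<ge> 1" and "\<not> (l = 1 \<and> r = 1)"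
  shows "((\<exists>f. admits {..<l + r - 1} (double_cycle l r) f \<and> nilpotent {..<l + r - 1} f)
            \<longleftrightarrow> min l r dvd max l r)
       \<and> (\<forall>f. admits {..<l + r - 1} (double_cycle l r) f \<and> nilpotent {..<l + r - 1} f
            \<longrightarrow> nil_class {..<l + r - 1} f = 2 * max l r - 1)"
proof -
  have pos: "0 < l" "0 < r"
    using assms(1,2) by auto
  have "min l r dvd max l r \<and> nil_class {..<l + r - 1} f = 2 * max l r - 1"
    if "admits {..<l + r - 1} (double_cycle l r) f" "nilpotent {..<l + r - 1} f" for f
    using double_cycle_network.nilpotent_class[OF _ that(2)] pos assms(3) that(1)
    unfolding double_cycle_network_def by blast
  then show ?thesis
    using admits_and_not_network[OF pos assms(3)] nilpotent_and_not_network[OF pos assms(3)]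
    by blast
qed

end
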